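(* Under the setting and hypotheses (i),(ii) below, there exists a constant $C=C(W,F,R,l)>0$ such that for all integers $N>1$, all $\lambda>0$, all real $E\neq 0$, all $x\in\mathbb{T}$ and all $1\le\alpha,\alpha'\le Nl$, $$\frac{1}{Nl}\log\big|\tilde\mu_N(x,E)_{(\alpha,\alpha')}\big|\le -\frac{|p(\alpha)-p(\alpha')|}{Nl}\log(\lambda+|E|)+\log\Big(1+\frac{\lambda}{|E|}\Big)+C .$$
   Context: Let $l\ge1$ and let $W,R,F$ be $l\times l$ real symmetric matrix functions on $\mathbb{T}=\mathbb{R}/2\pi\mathbb{Z}$ such that (i) all entries of $W$ and all off-diagonal entries of $R,F$ are real analytic; (ii) the diagonal entries are $F_{ii}=\tilde\phi^F_{ii}/\phi^F_{ii}$, $R_{ii}=\tilde\phi^R_{ii}/\phi^R_{ii}$ with $\tilde\phi^F_{ii},\phi^F_{ii},\tilde\phi^R_{ii},\phi^R_{ii}$ real analytic, $\phi^F_{ii},\phi^R_{ii}$ having finitely many zeros. Let $M(x)=\mathrm{diag}\{\phi^F_{ii}(x)\}_{i}\,\mathrm{diag}\{\phi^R_{ii}(x)\}_{i}$ and, for fixed $\omega\in\mathbb{T}$, $M_j(x)=M(x+j\omega)$, $W_n(x)=W(x+n\omega)$, $R_n(x)=R(x+n\omega)$, $F_n(x)=F(x+n\omega)$. $H_\lambda(x)$ is the operator $[H_\lambda(x)\vec\varphi]_n=-(W_{n+1}(x)\vec\varphi_{n+1}+W_n^T(x)\vec\varphi_{n-1}+R_n(x)\vec\varphi_n)+\lambda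 F_n(x)\vec\varphi_n$ on $\ell^2(\mathbb{Z},\mathbb{R}^l)$, and $H_N(x)$ is its restriction to the sites $[1,N]$, an $Nl\times Nl$ matrix ($N\times N$ blocks of size $l\times l$). Define $\tilde H_N(x,E)=(H_N(x)-E)\,\mathrm{diag}\{\tfrac{1}{\sqrt{1+E^2}}M_j(x),\ 1\le j\le N\}$ (block-diagonal); its entries are real analytic in $x$. $\tilde\mu_N(x,E)_{(\alpha,\alpha')}$ denotes the $(\alpha',\alpha)$-minor of $\tilde H_N(x,E)$ (determinant after deleting row $\alpha'$ and column $\alpha$). Every $1\le\alpha\le Nl$ is written uniquely as $\alpha=p(\alpha)l+q(\alpha)$ with $p(\alpha)\in\{0,\dots,N-1\}$, $q(\alpha)\in\{1,\dots,l\}$. *)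

theory Defs
  imports Complex_Main "Jordan_Normal_Form.Determinant"
begin

definition real_analytic :: "(real \<Rightarrow> real) \<Rightarrow> bool" where
  "real_analytic f \<longleftrightarrow> (\<forall>x. \<exists>r>0. \<exists>c::nat \<Rightarrow> real.
      \<forall>y. \<bar>y - x\<bar> < r \<longrightarrow> (\<lambda>n. c n * (y - x) ^ n) sums f y)"

(* functions on T = R / 2 pi Z are 2pi-periodic functions on R *)
definition periodic_2pi :: "(real \<Rightarrow> real) \<Rightarrow> bool" where
  "periodic_2pi f \<longleftrightarrow> (\<forall>x. f (x + 2 * pi) = f x)"

(* M(y)_{bb} = phi^F_bb(y) * phi^R_bb(y)   (0-based index b < l) *)
definition Mdiag :: "(nat \<Rightarrow> real \<Rightarrow> real) \<Rightarrow> (nat \<Rightarrow> real \<Rightarrow> real) \<Rightarrow> nat \<Rightarrow> real \<Rightarrow> real" where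
  "Mdiag phF phR b y = phF b y * phR b y"

(* The matrix  tilde H_N(x,E) = (H_N(x) - E) diag{M_j(x)/sqrt(1+E^2), 1<=j<=N},
   an (N l) x (N l) matrix, with 0-based global indices i = (site-1)*l + a.
   Matrix entries W a b, R a b, F a b are 0-based (a,b < l).
   The diagonal entries of the diagonal blocks are written in the cancelled
   (real analytic) form  lambda*phtF*phR - phtR*phF - E*phF*phR, i.e.
   (lambda F_aa - R_aa - E) * phF_aa * phR_aa with F_aa = phtF/phF, R_aa = phtR/phR. *)
definition tildeH ::
  "nat \<Rightarrow> nat \<Rightarrow> (nat \<Rightarrow> nat \<Rightarrow> real \<Rightarrow> real) \<Rightarrow> (nat \<Rightarrow> nat \<Rightarrow> real \<Rightarrow> real)
   \<Rightarrow> (nat \<Rightarrow> nat \<Rightarrow> real \<Rightarrow> real)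
   \<Rightarrow> (nat \<Rightarrow> real \<Rightarrow> real) \<Rightarrow> (nat \<Rightarrow> real \<Rightarrow> real)
   \<Rightarrow> (nat \<Rightarrow> real \<Rightarrow> real) \<Rightarrow> (nat \<Rightarrow> real \<Rightarrow> real)
   \<Rightarrow> real \<Rightarrow> real \<Rightarrow> real \<Rightarrow> real \<Rightarrow> real mat" where
  "tildeH l N W R F phF phtF phR phtR \<omega> lam E x =
     mat (N * l) (N * l) (\<lambda>(i, j).
       (let n = i div l; a = i mod l; m = j div l; b = j mod l;
            site = (\<lambda>k::nat. x + real (k + 1) * \<omega>) in
        (if m = n then
           (if a = b then
              lam * phtF a (site n) * phR a (site n)
              - phtR a (site n) * phF a (site n)
              - E * phF a (site n) * phR a (site n)
            else (lam * F a b (site n) - R a b (site n)) * Mdiag phF phR b (site n))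
         else if m = n + 1 then - W a b (site m) * Mdiag phF phR b (site m)
         else if n = m + 1 then - W b a (site n) * Mdiag phF phR b (site m)
         else 0) / sqrt (1 + E\<^sup>2)))"

definition tildemu ::
  "nat \<Rightarrow> nat \<Rightarrow> (nat \<Rightarrow> nat \<Rightarrow> real \<Rightarrow> real) \<Rightarrow> (nat \<Rightarrow> nat \<Rightarrow> real \<Rightarrow> real)
   \<Rightarrow> (nat \<Rightarrow> nat \<Rightarrow> real \<Rightarrow> real)
   \<Rightarrow> (nat \<Rightarrow> real \<Rightarrow> real) \<Rightarrow> (nat \<Rightarrow> real \<Rightarrow> real)
   \<Rightarrow> (nat \<Rightarrow> real \<Rightarrow> real) \<Rightarrow> (nat \<Rightarrow> real \<Rightarrow> real)
   \<Rightarrow> real \<Rightarrow> real \<Rightarrow> real \<Rightarrow> real \<Rightarrow> nat \<Rightarrow> nat \<Rightarrow> real" where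
  "tildemu l N W R F phF phtF phR phtR \<omega> lam E x \<alpha> \<alpha>' =
     det (mat_delete (tildeH l N W R F phF phtF phR phtR \<omega> lam E x) (\<alpha>' - 1) (\<alpha> - 1))"

(* alpha = p(alpha) l + q(alpha), q in {1..l} *)
definition pidx :: "nat \<Rightarrow> nat \<Rightarrow> nat" where
  "pidx l \<alpha> = (\<alpha> - 1) div l"

end

theory Submission
  imports Defs "HOL-Library.Periodic_Fun"
begin

(*
  Expand the minor as a determinant and weight row r by t^p(r) and column c by t^-p(c), where
  p is the block index: along every permutation the weights cancel except for those of the
  deleted row and column, so the minor is at most t^(p(alpha') - p(alpha)) times the product
  of the weighted row sums.  The matrix is block tridiagonal, and by analyticity and
  periodicity all coefficients are bounded by some K; so its entries are
  O(K^3 (lambda + |E| + 1) / sqrt(1 + E^2)) on the diagonal blocks and O(K^3 / sqrt(1 + E^2))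
  on the neighbouring ones.  With t = (lambda + |E|)^(+-1) (or t = 1 when lambda + |E| < 1)
  an off-diagonal weight costs at most lambda + |E| + 1, every weighted row sum is at most
  6 l K^3 (1 + lambda/|E|), and the prefactor yields the decay (lambda + |E|)^-|p(alpha) - p(alpha')|.
*)

lemma abs_det_le_weighted_row_sums:
  fixes M :: "real mat" and a b :: "nat \<Rightarrow> real"
  assumes M: "M \<in> carrier_mat m m" and t: "t > 0"
  shows "\<bar>det M\<bar> \<le> t powr (\<Sum>r<m. b r - a r) *
     (\<Prod>r<m. \<Sum>c<m. \<bar>M $$ (r,c)\<bar> * t powr (a r - b c))"
proof -
  let ?P = "{p. p permutes {..<m}}"
  let ?w = "\<lambda>r c. \<bar>M $$ (r,c)\<bar> * t powr (a r - b c)"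
  let ?s = "\<Sum>r<m. b r - a r"
  have term_eq: "\<bar>signof p * (\<Prod>i<m. M $$ (i, p i))\<bar> = t powr ?s * (\<Prod>i<m. ?w i (p i))"
    if "p \<in> ?P" for p
  proof -
    have "(\<Sum>i<m. b (p i)) = (\<Sum>i<m. b i)"
      using sum.permute[of p "{..<m}" b] that by (simp add: comp_def)
    then have "(\<Prod>i<m. t powr (a i - b (p i))) = t powr (- ?s)"
      using t by (simp add: powr_sum[symmetric] sum_subtractf)
    then have "t powr ?s * (\<Prod>i<m. ?w i (p i)) = (\<Prod>i<m. \<bar>M $$ (i, p i)\<bar>) * (t powr ?s * t powr (- ?s))"
      by (simp add: prod.distrib algebra_simps)
    also have "\<dots> = (\<Prod>i<m. \<bar>M $$ (i, p i)\<bar>)"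
      using t by (simp flip: powr_add)
    moreover have "\<bar>signof p :: real\<bar> = 1"
      by (cases p rule: sign_cases) (simp_all add: sign_def)
    ultimately show ?thesis
      by (simp add: abs_mult abs_prod)
  qed
  have "\<bar>det M\<bar> \<le> (\<Sum>p\<in>?P. \<bar>signof p * (\<Prod>i<m. M $$ (i, p i))\<bar>)"
    unfolding Determinant.det_def using M by (simp add: atLeast0LessThan)
  also have "\<dots> = t powr ?s * (\<Sum>p\<in>?P. \<Prod>i<m. ?w i (p i))"
    by (simp add: term_eq sum_distrib_left)
  also have "(\<Sum>p\<in>?P. \<Prod>i<m. ?w i (p i)) \<le> (\<Sum>g\<in>PiE {..<m} (\<lambda>_. {..<m}). \<Prod>i<m. ?w i (g i))"
  proof -
    have perm_lt: "p k < m" if "p permutes {..<m}" "k < m" for p k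
      using permutes_in_image[OF that(1)] that(2) by simp
    have inj: "inj_on (\<lambda>p. restrict p {..<m}) ?P"
      by (rule inj_onI) (auto simp: permutes_def fun_eq_iff restrict_def, metis)
    have "(\<Sum>p\<in>?P. \<Prod>i<m. ?w i (p i)) = (\<Sum>g\<in>(\<lambda>p. restrict p {..<m}) ` ?P. \<Prod>i<m. ?w i (g i))"
      by (subst sum.reindex[OF inj]) (auto intro!: sum.cong prod.cong)
    also have "\<dots> \<le> (\<Sum>g\<in>PiE {..<m} (\<lambda>_. {..<m}). \<Prod>i<m. ?w i (g i))"
    proof (rule sum_mono2)
      show "(\<lambda>p. restrict p {..<m}) ` ?P \<subseteq> PiE {..<m} (\<lambda>_. {..<m})"
        by (intro image_subsetI) (simp add: restrict_PiE_iff perm_lt)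
    qed (auto intro!: prod_nonneg finite_PiE)
    finally show ?thesis .
  qed
  also have "(\<Sum>g\<in>PiE {..<m} (\<lambda>_. {..<m}). \<Prod>i<m. ?w i (g i)) = (\<Prod>r<m. \<Sum>c<m. ?w r c)"
    by (rule prod_sum_PiE[symmetric]) auto
  finally show ?thesis by (simp add: mult_left_mono)
qed

lemma sum_insert_index:
  fixes g :: "nat \<Rightarrow> real"
  assumes "k < Suc m"
  shows "(\<Sum>r<m. g (insert_index k r)) = (\<Sum>i<Suc m. g i) - g k"
proof -
  have "(\<Sum>r<m. g (insert_index k r)) = sum g (insert_index k ` {0..<m})"
    by (simp add: sum.reindex insert_index_inj_on atLeast0LessThan)
  also have "\<dots> = sum g ({..<Suc m} - {k})"
    using insert_index_image[OF assms] by (simp add: atLeast0LessThan)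
  finally show ?thesis using assms by (simp add: sum_diff1)
qed

lemma abs_det_mat_delete_le:
  fixes A :: "real mat" and f :: "nat \<Rightarrow> real"
  assumes A: "A \<in> carrier_mat (Suc m) (Suc m)" and i: "i < Suc m" and j: "j < Suc m"
    and t: "t > 0"
    and rows: "\<And>r. r < Suc m \<Longrightarrow> (\<Sum>k<Suc m. \<bar>A $$ (r,k)\<bar> * t powr (f r - f k)) \<le> Q"
  shows "\<bar>det (mat_delete A i j)\<bar> \<le> t powr (f i - f j) * Q ^ m"
proof -
  let ?\<rho> = "insert_index i" and ?\<gamma> = "insert_index j"
  define M where "M = mat_delete A i j"
  have M: "M \<in> carrier_mat m m" and M_entry: "\<And>r c. r < m \<Longrightarrow> c < m \<Longrightarrow> M $$ (r,c) = A $$ (?\<rho> r, ?\<gamma> c)"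
    using A i j mat_delete_index[OF A i j] unfolding M_def by (auto simp: mat_delete_carrier)
  have \<rho>_lt: "?\<rho> r < Suc m" if "r < m" for r
    using that by (simp add: insert_index_def)
  have weight_sum: "(\<Sum>r<m. f (?\<gamma> r) - f (?\<rho> r)) = f i - f j"
    using sum_insert_index[OF i, of f] sum_insert_index[OF j, of f] by (simp add: sum_subtractf)
  have row_le: "(\<Sum>c<m. \<bar>M $$ (r,c)\<bar> * t powr (f (?\<rho> r) - f (?\<gamma> c))) \<le> Q" if r: "r < m" for r
  proof -
    let ?w = "\<lambda>k. \<bar>A $$ (?\<rho> r, k)\<bar> * t powr (f (?\<rho> r) - f k)"
    have "(\<Sum>c<m. \<bar>M $$ (r,c)\<bar> * t powr (f (?\<rho> r) - f (?\<gamma> c))) = sum ?w (?\<gamma> ` {..<m})"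
      using r by (simp add: M_entry sum.reindex insert_index_inj_on)
    also have "\<dots> \<le> sum ?w {..<Suc m}"
      using insert_index_image[OF j] by (intro sum_mono2) (auto simp: atLeast0LessThan)
    also have "\<dots> \<le> Q" using rows[OF \<rho>_lt[OF r]] .
    finally show ?thesis .
  qed
  have "\<bar>det M\<bar> \<le> t powr (f i - f j) * (\<Prod>r<m. \<Sum>c<m. \<bar>M $$ (r,c)\<bar> * t powr (f (?\<rho> r) - f (?\<gamma> c)))"
    using abs_det_le_weighted_row_sums[OF M t, of "\<lambda>c. f (?\<gamma> c)" "\<lambda>r. f (?\<rho> r)"] weight_sum by simp
  also have "\<dots> \<le> t powr (f i - f j) * (\<Prod>r<m. Q)"
    by (intro mult_left_mono prod_mono) (auto intro: sum_nonneg row_le)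
  finally show ?thesis unfolding M_def by simp
qed

lemma abs_mult_le: "\<bar>x\<bar> \<le> A \<Longrightarrow> \<bar>y\<bar> \<le> B \<Longrightarrow> \<bar>x * y\<bar> \<le> A * (B::real)"
  by (simp add: abs_mult mult_mono')

lemma card_div_eq:
  fixes l c :: nat assumes "l > 0"
  shows "card {k. k div l = c} = l"
proof -
  have div_iff: "k div l = c \<longleftrightarrow> c * l \<le> k \<and> k < c * l + l" for k
  proof
    assume c: "k div l = c"
    have "k div l * l \<le> k" "k < l + l * (k div l)"
      using div_times_less_eq_dividend dividend_less_times_div[OF assms] by blast+
    then show "c * l \<le> k \<and> k < c * l + l"
      unfolding c by (simp add: mult.commute)
  next
    assume "c * l \<le> k \<and> k < c * l + l"
    then show "k div l = c"
      by (intro div_nat_eqI) (simp_all add: mult.commute)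
  qed
  have "{k. k div l = c} = {c * l..<c * l + l}"
    by (simp add: set_eq_iff div_iff)
  then show ?thesis by simp
qed

lemma add_one_div_sqrt_le:
  fixes lam E :: real assumes "lam > 0" "E \<noteq> 0"
  shows "(lam + \<bar>E\<bar> + 1) / sqrt (1 + E\<^sup>2) \<le> 2 * (1 + lam / \<bar>E\<bar>)"
proof -
  define s where "s = sqrt (1 + E\<^sup>2)"
  have s1: "s \<ge> 1" unfolding s_def by simp
  have sE: "s \<ge> \<bar>E\<bar>" unfolding s_def using real_sqrt_le_mono[of "E\<^sup>2" "1+E\<^sup>2"] by simp
  have "lam \<le> 2 * s * lam / \<bar>E\<bar>"
    using sE assms by (simp add: field_simps)
  then have "lam + \<bar>E\<bar> + 1 \<le> s * (2 * (1 + lam / \<bar>E\<bar>))"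
    using s1 sE by (simp add: algebra_simps)
  then show ?thesis
    using s1 by (simp add: s_def[symmetric] pos_divide_le_eq mult.commute)
qed

lemma exists_weight_base:
  fixes u p p' :: real assumes u: "u > 0"
  shows "\<exists>t>0. t \<le> u + 1 \<and> 1 / t \<le> u + 1 \<and> (p' - p) * ln t \<le> - \<bar>p - p'\<bar> * ln u"
proof (cases "u \<ge> 1")
  case True
  then have "1 / u \<le> 1"
    by simp
  then have "1 / u \<le> u + 1"
    using u by linarith
  show ?thesis
  proof (cases "p \<le> p'")
    case True
    then show ?thesis
      using \<open>1 / u \<le> u + 1\<close> u by (intro exI[of _ "1 / u"]) (simp add: ln_div algebra_simps)
  next
    case False
    then show ?thesis
      using \<open>1 / u \<le> u + 1\<close> u by (intro exI[of _ u]) simp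
  qed
next
  case False
  then show ?thesis
    using u by (intro exI[of _ 1]) (auto simp: mult_nonneg_nonpos)
qed

lemma real_analytic_isCont:
  assumes "real_analytic f" shows "isCont f x"
proof -
  from assms obtain r c where r: "r > 0"
    and s: "\<And>y. \<bar>y - x\<bar> < r \<Longrightarrow> (\<lambda>n. c n * (y - x) ^ n) sums f y"
    unfolding real_analytic_def by blast
  let ?g = "\<lambda>h. \<Sum>n. c n * h ^ n"
  have "summable (\<lambda>n. c n * (r/2) ^ n)"
    using s[of "x + r/2"] r by (simp add: sums_iff)
  then have g: "isCont ?g 0"
    by (rule isCont_powser) (use r in auto)
  have "isCont (\<lambda>y. y - x) x"
    by (intro continuous_intros)
  from isCont_o2[OF this] g have "isCont (\<lambda>y. ?g (y - x)) x"
    by simp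
  moreover have "eventually (\<lambda>y. f y = ?g (y - x)) (nhds x)"
  proof -
    have "eventually (\<lambda>y. \<bar>y - x\<bar> < r) (nhds x)"
      unfolding eventually_nhds_metric using r by (intro exI[of _ r]) (simp add: dist_real_def)
    then show ?thesis
      by eventually_elim (use s in \<open>auto simp: sums_iff\<close>)
  qed
  ultimately show ?thesis
    using isCont_cong[of f "\<lambda>y. ?g (y - x)" x] by blast
qed

lemma periodic_2pi_continuous_bounded:
  assumes "periodic_2pi f" and "\<And>x. isCont f x"
  shows "\<exists>K. \<forall>y. \<bar>f y\<bar> \<le> K"
proof -
  interpret periodic_fun_simple f "2 * pi"
    using assms(1) by unfold_locales (simp add: periodic_2pi_def)
  obtain K where K: "\<And>x. 0 \<le> x \<Longrightarrow> x \<le> 2 * pi \<Longrightarrow> \<bar>f x\<bar> \<le> K"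
    using isCont_bounded[of 0 "2 * pi" "\<lambda>x. \<bar>f x\<bar>"] assms(2) by auto
  have "\<bar>f y\<bar> \<le> K" for y
  proof -
    define k where "k = \<lfloor>y / (2 * pi)\<rfloor>"
    have "of_int k * (2 * pi) \<le> y" "y < (of_int k + 1) * (2 * pi)"
      unfolding k_def by (simp_all add: floor_divide_lower floor_divide_upper)
    then have "\<bar>f (y - of_int k * (2 * pi))\<bar> \<le> K"
      by (intro K) (simp_all add: algebra_simps)
    then show ?thesis by (simp add: minus_of_int)
  qed
  then show ?thesis by blast
qed

lemma finite_family_uniform_bound:
  fixes S :: "('a \<Rightarrow> real) set"
  assumes "finite S" and "\<And>f. f \<in> S \<Longrightarrow> \<exists>K. \<forall>y. \<bar>f y\<bar> \<le> K"
  shows "\<exists>K\<ge>1. \<forall>f\<in>S. \<forall>y. \<bar>f y\<bar> \<le> K"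
  using assms
proof (induction S rule: finite_induct)
  case empty
  show ?case by auto
next
  case (insert g S)
  then obtain K K' where "K \<ge> 1" "\<forall>f\<in>S. \<forall>y. \<bar>f y\<bar> \<le> K" "\<forall>y. \<bar>g y\<bar> \<le> K'"
    by blast
  then show ?case
    by (intro exI[of _ "max K K'"]) (auto intro: max.coboundedI1 max.coboundedI2)
qed

definition coeffs_bounded ::
  "nat \<Rightarrow> (nat \<Rightarrow> nat \<Rightarrow> real \<Rightarrow> real) \<Rightarrow> (nat \<Rightarrow> nat \<Rightarrow> real \<Rightarrow> real)
   \<Rightarrow> (nat \<Rightarrow> nat \<Rightarrow> real \<Rightarrow> real)
   \<Rightarrow> (nat \<Rightarrow> real \<Rightarrow> real) \<Rightarrow> (nat \<Rightarrow> real \<Rightarrow> real)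
   \<Rightarrow> (nat \<Rightarrow> real \<Rightarrow> real) \<Rightarrow> (nat \<Rightarrow> real \<Rightarrow> real) \<Rightarrow> real \<Rightarrow> bool" where
  "coeffs_bounded l W R F phF phtF phR phtR K \<longleftrightarrow>
     (\<forall>a<l. \<forall>b<l. \<forall>y. \<bar>W a b y\<bar> \<le> K \<and> (a \<noteq> b \<longrightarrow> \<bar>F a b y\<bar> \<le> K \<and> \<bar>R a b y\<bar> \<le> K)) \<and>
     (\<forall>a<l. \<forall>y. \<bar>phF a y\<bar> \<le> K \<and> \<bar>phtF a y\<bar> \<le> K \<and> \<bar>phR a y\<bar> \<le> K \<and> \<bar>phtR a y\<bar> \<le> K)"

lemma coeffs_bounded_if_analytic:
  fixes W R F :: "nat \<Rightarrow> nat \<Rightarrow> real \<Rightarrow> real" and phF phtF phR phtR :: "nat \<Rightarrow> real \<Rightarrow> real"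
  assumes W: "\<And>i j. i < l \<Longrightarrow> j < l \<Longrightarrow> real_analytic (W i j) \<and> periodic_2pi (W i j)"
    and R: "\<And>i j. i < l \<Longrightarrow> j < l \<Longrightarrow> i \<noteq> j \<Longrightarrow> real_analytic (R i j) \<and> periodic_2pi (R i j)"
    and F: "\<And>i j. i < l \<Longrightarrow> j < l \<Longrightarrow> i \<noteq> j \<Longrightarrow> real_analytic (F i j) \<and> periodic_2pi (F i j)"
    and ph: "\<And>i. i < l \<Longrightarrow>
        real_analytic (phF i) \<and> periodic_2pi (phF i) \<and>
        real_analytic (phtF i) \<and> periodic_2pi (phtF i) \<and>
        real_analytic (phR i) \<and> periodic_2pi (phR i) \<and>
        real_analytic (phtR i) \<and> periodic_2pi (phtR i)"
  shows "\<exists>K\<ge>1. coeffs_bounded l W R F phF phtF phR phtR K"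
proof -
  define Off where "Off = {(a,b). a < l \<and> b < l \<and> a \<noteq> (b::nat)}"
  define S where "S = (\<lambda>(a,b). W a b) ` ({..<l} \<times> {..<l}) \<union> (\<lambda>(a,b). F a b) ` Off
      \<union> (\<lambda>(a,b). R a b) ` Off \<union> phF ` {..<l} \<union> phtF ` {..<l} \<union> phR ` {..<l} \<union> phtR ` {..<l}"
  have "finite Off"
    unfolding Off_def by (rule finite_subset[of _ "{..<l} \<times> {..<l}"]) auto
  then have fin: "finite S"
    unfolding S_def by (intro finite_UnI finite_imageI) auto
  have bdd: "\<exists>K. \<forall>y. \<bar>f y\<bar> \<le> K" if "f \<in> S" for f
  proof -
    have "real_analytic f \<and> periodic_2pi f"
      using that unfolding S_def Off_def
      by (elim UnE imageE) (auto simp: W R F ph split: prod.splits)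
    then show ?thesis
      using periodic_2pi_continuous_bounded real_analytic_isCont by blast
  qed
  obtain K where "K \<ge> 1" and K: "\<And>f y. f \<in> S \<Longrightarrow> \<bar>f y\<bar> \<le> K"
    using finite_family_uniform_bound[OF fin bdd] by blast
  have "W a b \<in> S" if "a < l" "b < l" for a b
    using that unfolding S_def by (intro UnI1 image_eqI[where x = "(a, b)"]) auto
  moreover have "F a b \<in> S \<and> R a b \<in> S" if "a < l" "b < l" "a \<noteq> b" for a b
    using that unfolding S_def Off_def by (auto intro: image_eqI[where x = "(a, b)"])
  moreover have "phF a \<in> S \<and> phtF a \<in> S \<and> phR a \<in> S \<and> phtR a \<in> S" if "a < l" for a
    using that unfolding S_def by auto
  ultimately have "coeffs_bounded l W R F phF phtF phR phtR K"
    unfolding coeffs_bounded_def using K by simp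
  with \<open>K \<ge> 1\<close> show ?thesis
    by blast
qed

lemma tildeH_entry_eq_0:
  assumes "i < N * l" "j < N * l" "i div l + 1 < j div l \<or> j div l + 1 < i div l"
  shows "tildeH l N W R F phF phtF phR phtR \<omega> lam E x $$ (i,j) = 0"
  using assms by (auto simp: tildeH_def Let_def)

lemma diagonal_block_entry_le:
  assumes K: "coeffs_bounded l W R F phF phtF phR phtR K" "K \<ge> 1"
    and lam: "lam > 0" and ab: "a < l" "b < l"
  shows "\<bar>if a = b then lam * phtF a y * phR a y - phtR a y * phF a y - E * phF a y * phR a y
          else (lam * F a b y - R a b y) * Mdiag phF phR b y\<bar> \<le> K^3 * (lam + \<bar>E\<bar> + 1)"
proof -
  have ph: "\<bar>phF c y\<bar> \<le> K \<and> \<bar>phtF c y\<bar> \<le> K \<and> \<bar>phR c y\<bar> \<le> K \<and> \<bar>phtR c y\<bar> \<le> K" if "c < l" for c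
    using K(1) that unfolding coeffs_bounded_def by blast
  have FR: "\<bar>F a b y\<bar> \<le> K \<and> \<bar>R a b y\<bar> \<le> K" if "a \<noteq> b"
    using K(1) ab that unfolding coeffs_bounded_def by blast
  have K3: "K * K \<le> K^3"
    using K(2) by (simp add: power3_eq_cube)
  have prods: "\<bar>phtF a y * phR a y\<bar> \<le> K * K" "\<bar>phtR a y * phF a y\<bar> \<le> K * K"
      "\<bar>phF a y * phR a y\<bar> \<le> K * K"
    using ph[OF ab(1)] by (auto intro: abs_mult_le)
  have "\<bar>lam * phtF a y * phR a y - phtR a y * phF a y - E * phF a y * phR a y\<bar>
      \<le> \<bar>lam * phtF a y * phR a y - phtR a y * phF a y\<bar> + \<bar>E * phF a y * phR a y\<bar>"
    by (rule abs_triangle_ineq4)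
  also have "\<dots> \<le> lam * \<bar>phtF a y * phR a y\<bar> + \<bar>phtR a y * phF a y\<bar> + \<bar>E\<bar> * \<bar>phF a y * phR a y\<bar>"
    using abs_triangle_ineq4[of "lam * phtF a y * phR a y" "phtR a y * phF a y"] lam
    by (simp add: abs_mult mult.assoc)
  also have "\<dots> \<le> lam * (K * K) + K * K + \<bar>E\<bar> * (K * K)"
    using prods lam by (intro add_mono mult_left_mono) auto
  also have "\<dots> = (K * K) * (lam + \<bar>E\<bar> + 1)"
    by (simp add: algebra_simps)
  also have "\<dots> \<le> K^3 * (lam + \<bar>E\<bar> + 1)"
    using K3 lam by (intro mult_right_mono) auto
  finally have diag: "\<bar>lam * phtF a y * phR a y - phtR a y * phF a y - E * phF a y * phR a y\<bar>
      \<le> K^3 * (lam + \<bar>E\<bar> + 1)" .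
  have "\<bar>(lam * F a b y - R a b y) * Mdiag phF phR b y\<bar> \<le> K^3 * (lam + \<bar>E\<bar> + 1)" if "a \<noteq> b"
  proof -
    have "\<bar>lam * F a b y - R a b y\<bar> \<le> lam * \<bar>F a b y\<bar> + \<bar>R a b y\<bar>"
      using abs_triangle_ineq4[of "lam * F a b y" "R a b y"] lam by (simp add: abs_mult)
    also have "\<dots> \<le> lam * K + K"
      using FR[OF that] lam by (intro add_mono mult_left_mono) auto
    also have "\<dots> \<le> K * (lam + \<bar>E\<bar> + 1)"
      using K(2) by (simp add: algebra_simps)
    finally have "\<bar>lam * F a b y - R a b y\<bar> \<le> K * (lam + \<bar>E\<bar> + 1)" .
    moreover have "\<bar>Mdiag phF phR b y\<bar> \<le> K * K"
      unfolding Mdiag_def using ph[OF ab(2)] by (intro abs_mult_le) auto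
    ultimately have "\<bar>(lam * F a b y - R a b y) * Mdiag phF phR b y\<bar> \<le> K * (lam + \<bar>E\<bar> + 1) * (K * K)"
      by (rule abs_mult_le)
    then show ?thesis
      by (simp add: power3_eq_cube ac_simps)
  qed
  then show ?thesis
    using diag by auto
qed

lemma offdiagonal_block_entry_le:
  assumes "coeffs_bounded l W R F phF phtF phR phtR K" "a < l" "b < l" "c < l"
  shows "\<bar>W a b z * Mdiag phF phR c w\<bar> \<le> K^3"
proof -
  have "\<bar>W a b z * Mdiag phF phR c w\<bar> \<le> K * (K * K)"
    using assms unfolding coeffs_bounded_def Mdiag_def by (intro abs_mult_le) auto
  then show ?thesis
    by (simp add: power3_eq_cube)
qed

lemma tildeH_weighted_entry_le:
  assumes K: "coeffs_bounded l W R F phF phtF phR phtR K" "K \<ge> 1"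
    and lam: "lam > 0" and t: "t > 0" "t \<le> lam + \<bar>E\<bar> + 1" "1 / t \<le> lam + \<bar>E\<bar> + 1"
    and ij: "i < N * l" "j < N * l"
  shows "\<bar>tildeH l N W R F phF phtF phR phtR \<omega> lam E x $$ (i,j)\<bar> * t powr (real (i div l) - real (j div l))
           \<le> K^3 * (lam + \<bar>E\<bar> + 1) / sqrt (1 + E\<^sup>2)"
proof -
  define n where "n = i div l"
  define m where "m = j div l"
  define a where "a = i mod l"
  define b where "b = j mod l"
  define y where "y = x + real (n + 1) * \<omega>"
  define z where "z = x + real (m + 1) * \<omega>"
  define u where "u = lam + \<bar>E\<bar> + 1"
  define h where "h = (if m = n then
           (if a = b then lam * phtF a y * phR a y - phtR a y * phF a y - E * phF a y * phR a y
            else (lam * F a b y - R a b y) * Mdiag phF phR b y)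
         else if m = n + 1 then - W a b z * Mdiag phF phR b z
         else if n = m + 1 then - W b a y * Mdiag phF phR b z
         else 0)"
  have "l > 0"
    using ij by (cases l) auto
  then have ab: "a < l" "b < l"
    unfolding a_def b_def by simp_all
  have u: "u \<ge> 1"
    using lam by (simp add: u_def)
  have entry: "tildeH l N W R F phF phtF phR phtR \<omega> lam E x $$ (i,j) = h / sqrt (1 + E\<^sup>2)"
    using ij unfolding tildeH_def h_def n_def m_def a_def b_def y_def z_def by (simp add: Let_def)
  have "\<bar>h\<bar> * t powr (real n - real m) \<le> K^3 * u"
  proof -
    consider (diag) "m = n" | (up) "m = n + 1" | (down) "n = m + 1" | (far) "m \<noteq> n" "m \<noteq> n + 1" "n \<noteq> m + 1"
      by blast
    then show ?thesis
    proof cases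
      case diag
      then show ?thesis
        using diagonal_block_entry_le[OF K lam ab] t unfolding h_def u_def by simp
    next
      case up
      then have "t powr (real n - real m) = 1 / t"
        using t by (simp add: powr_minus_divide)
      moreover have "\<bar>W a b z * Mdiag phF phR b z\<bar> * (1 / t) \<le> K^3 * u"
        using offdiagonal_block_entry_le[OF K(1) ab ab(2)] t by (intro mult_mono') (auto simp: u_def)
      ultimately show ?thesis
        using up unfolding h_def by simp
    next
      case down
      then have "t powr (real n - real m) = t"
        using t by simp
      moreover have "\<bar>W b a y * Mdiag phF phR b z\<bar> * t \<le> K^3 * u"
        using offdiagonal_block_entry_le[OF K(1) ab(2,1,2)] t by (intro mult_mono') (auto simp: u_def)
      ultimately show ?thesis
        using down unfolding h_def by simp
    next
      case far
      then show ?thesis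
        using K(2) u unfolding h_def by simp
    qed
  qed
  then show ?thesis
    unfolding entry n_def m_def u_def by (simp add: abs_divide divide_right_mono)
qed

lemma tildeH_weighted_row_sum_le:
  assumes K: "coeffs_bounded l W R F phF phtF phR phtR K" "K \<ge> 1" and l: "l > 0"
    and lam: "lam > 0" and E: "E \<noteq> 0"
    and t: "t > 0" "t \<le> lam + \<bar>E\<bar> + 1" "1 / t \<le> lam + \<bar>E\<bar> + 1" and i: "i < N * l"
  shows "(\<Sum>k<N * l. \<bar>tildeH l N W R F phF phtF phR phtR \<omega> lam E x $$ (i,k)\<bar>
            * t powr (real (i div l) - real (k div l))) \<le> 6 * real l * K^3 * (1 + lam / \<bar>E\<bar>)"
proof -
  let ?w = "\<lambda>k. \<bar>tildeH l N W R F phF phtF phR phtR \<omega> lam E x $$ (i,k)\<bar>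
            * t powr (real (i div l) - real (k div l))"
  let ?T = "K^3 * (lam + \<bar>E\<bar> + 1) / sqrt (1 + E\<^sup>2)"
  let ?block = "\<lambda>c. {k::nat. k div l = c}"
  define S where "S = ?block (i div l) \<union> ?block (Suc (i div l)) \<union> ?block (i div l - 1)"
  have block: "finite (?block c)" "card (?block c) = l" for c
    using card_div_eq[OF l, of c] l by (simp_all add: card_ge_0_finite)
  have "card S \<le> card (?block (i div l) \<union> ?block (Suc (i div l))) + card (?block (i div l - 1))"
    unfolding S_def by (rule card_Un_le)
  also have "\<dots> \<le> card (?block (i div l)) + card (?block (Suc (i div l))) + card (?block (i div l - 1))"
    by (intro add_right_mono card_Un_le)
  also have "\<dots> = 3 * l"
    using block(2) by simp
  finally have card_S: "card ({..<N * l} \<inter> S) \<le> 3 * l"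
    using card_mono[of S "{..<N * l} \<inter> S"] block(1) unfolding S_def by auto
  have "?w k = 0" if "k \<in> {..<N * l} - {..<N * l} \<inter> S" for k
  proof -
    have "k div l \<noteq> i div l" "k div l \<noteq> Suc (i div l)" "k div l \<noteq> i div l - 1"
      using that unfolding S_def by auto
    then have "i div l + 1 < k div l \<or> k div l + 1 < i div l"
      by arith
    then show ?thesis
      using that i by (simp add: tildeH_entry_eq_0)
  qed
  then have "sum ?w {..<N * l} = sum ?w ({..<N * l} \<inter> S)"
    by (intro sum.mono_neutral_right) auto
  also have "\<dots> \<le> card ({..<N * l} \<inter> S) * ?T"
    using K lam t i by (intro sum_bounded_above tildeH_weighted_entry_le) auto
  also have "\<dots> \<le> (3 * l) * ?T"
    using card_S K(2) lam by (intro mult_right_mono) auto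
  also have "\<dots> \<le> (3 * l) * (K^3 * (2 * (1 + lam / \<bar>E\<bar>)))"
    using add_one_div_sqrt_le[OF lam E] K(2)
    by (intro mult_left_mono) (simp_all add: mult.assoc times_divide_eq_right[symmetric] del: times_divide_eq_right)
  finally show ?thesis by (simp add: algebra_simps)
qed

lemma abs_tildemu_le:
  assumes K: "coeffs_bounded l W R F phF phtF phR phtR K" "K \<ge> 1"
    and l: "l > 0" and lam: "lam > 0" and E: "E \<noteq> 0"
    and t: "t > 0" "t \<le> lam + \<bar>E\<bar> + 1" "1 / t \<le> lam + \<bar>E\<bar> + 1"
    and \<alpha>: "\<alpha> \<in> {1..N * l}" "\<alpha>' \<in> {1..N * l}"
  shows "\<bar>tildemu l N W R F phF phtF phR phtR \<omega> lam E x \<alpha> \<alpha>'\<bar>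
    \<le> t powr (real (pidx l \<alpha>') - real (pidx l \<alpha>)) * (6 * real l * K^3 * (1 + lam / \<bar>E\<bar>)) ^ (N * l - 1)"
proof -
  define n where "n = N * l - 1"
  have n: "N * l = Suc n"
    using \<alpha> by (auto simp: n_def)
  show ?thesis
    unfolding tildemu_def pidx_def n_def[symmetric]
  proof (rule abs_det_mat_delete_le)
    show "tildeH l N W R F phF phtF phR phtR \<omega> lam E x \<in> carrier_mat (Suc n) (Suc n)"
      using n by (simp add: tildeH_def)
    show "\<alpha>' - 1 < Suc n" "\<alpha> - 1 < Suc n"
      using \<alpha> n by auto
    show "(\<Sum>k<Suc n. \<bar>tildeH l N W R F phF phtF phR phtR \<omega> lam E x $$ (r, k)\<bar>
            * t powr (real (r div l) - real (k div l))) \<le> 6 * real l * K^3 * (1 + lam / \<bar>E\<bar>)"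
      if "r < Suc n" for r
      using tildeH_weighted_row_sum_le[OF K l lam E t, of r N] that n by simp
  qed (use t in auto)
qed

lemma tildemu_log_bound:
  assumes K: "coeffs_bounded l W R F phF phtF phR phtR K" "K \<ge> 1"
    and l: "l \<ge> 1" and N: "N > 1" and lam: "lam > 0" and E: "E \<noteq> 0"
    and \<alpha>: "\<alpha> \<in> {1..N * l}" "\<alpha>' \<in> {1..N * l}"
    and mu: "tildemu l N W R F phF phtF phR phtR \<omega> lam E x \<alpha> \<alpha>' \<noteq> 0"
  shows "1 / real (N * l) * ln \<bar>tildemu l N W R F phF phtF phR phtR \<omega> lam E x \<alpha> \<alpha>'\<bar>
    \<le> - real_of_int \<bar>int (pidx l \<alpha>) - int (pidx l \<alpha>')\<bar> / real (N * l) * ln (lam + \<bar>E\<bar>)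
       + ln (1 + lam / \<bar>E\<bar>) + ln (6 * real l * K^3)"
proof -
  define n where "n = N * l"
  define P where "P = real (pidx l \<alpha>)"
  define P' where "P' = real (pidx l \<alpha>')"
  define Q where "Q = 6 * real l * K^3 * (1 + lam / \<bar>E\<bar>)"
  let ?\<mu> = "tildemu l N W R F phF phtF phR phtR \<omega> lam E x \<alpha> \<alpha>'"
  have n: "real n > 0"
    using N l by (auto simp: n_def)
  have "real l * K^3 \<ge> 1 * 1"
    using K(2) l by (intro mult_mono) auto
  then have lK: "6 * real l * K^3 \<ge> 1"
    by simp
  have "1 * 1 \<le> 6 * real l * K^3 * (1 + lam / \<bar>E\<bar>)"
    using lK lam by (intro mult_mono) auto
  then have Q: "Q \<ge> 1"
    unfolding Q_def by simp
  have "lam + \<bar>E\<bar> > 0"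
    using lam by simp
  then obtain t where t: "t > 0" "t \<le> lam + \<bar>E\<bar> + 1" "1 / t \<le> lam + \<bar>E\<bar> + 1"
    and t_ln: "(P' - P) * ln t \<le> - \<bar>P - P'\<bar> * ln (lam + \<bar>E\<bar>)"
    using exists_weight_base[where p = P and p' = P'] by blast
  have "\<bar>?\<mu>\<bar> \<le> t powr (P' - P) * Q ^ (n - 1)"
    using abs_tildemu_le[OF K _ lam E t \<alpha>] l unfolding P_def P'_def Q_def n_def by simp
  then have "ln \<bar>?\<mu>\<bar> \<le> ln (t powr (P' - P) * Q ^ (n - 1))"
    using mu t Q by (subst ln_le_cancel_iff) auto
  also have "\<dots> = (P' - P) * ln t + real (n - 1) * ln Q"
    using t Q by (simp add: ln_mult ln_realpow)
  also have "\<dots> \<le> - \<bar>P - P'\<bar> * ln (lam + \<bar>E\<bar>) + real n * ln Q"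
    using t_ln Q by (intro add_mono mult_right_mono) auto
  finally have "1 / real n * ln \<bar>?\<mu>\<bar> \<le> - \<bar>P - P'\<bar> / real n * ln (lam + \<bar>E\<bar>) + ln Q"
    using n by (simp add: field_simps)
  moreover have "1 + lam / \<bar>E\<bar> > 0"
    using lam by (simp add: add_pos_nonneg)
  then have "ln Q = ln (6 * real l * K^3) + ln (1 + lam / \<bar>E\<bar>)"
    unfolding Q_def using lK by (subst ln_mult) auto
  ultimately show ?thesis
    by (simp add: n_def P_def P'_def)
qed

theorem proposition2p1:
  fixes l :: nat and W R F :: "nat \<Rightarrow> nat \<Rightarrow> real \<Rightarrow> real"
    and phF phtF phR phtR :: "nat \<Rightarrow> real \<Rightarrow> real" and \<omega> :: real
  assumes l: "l \<ge> 1"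
    and symW: "\<And>i j x. i < l \<Longrightarrow> j < l \<Longrightarrow> W i j x = W j i x"
    and symR: "\<And>i j x. i < l \<Longrightarrow> j < l \<Longrightarrow> R i j x = R j i x"
    and symF: "\<And>i j x. i < l \<Longrightarrow> j < l \<Longrightarrow> F i j x = F j i x"
    and anW: "\<And>i j. i < l \<Longrightarrow> j < l \<Longrightarrow> real_analytic (W i j) \<and> periodic_2pi (W i j)"
    and anR: "\<And>i j. i < l \<Longrightarrow> j < l \<Longrightarrow> i \<noteq> j \<Longrightarrow> real_analytic (R i j) \<and> periodic_2pi (R i j)"
    and anF: "\<And>i j. i < l \<Longrightarrow> j < l \<Longrightarrow> i \<noteq> j \<Longrightarrow> real_analytic (F i j) \<and> periodic_2pi (F i j)"
    and anphi: "\<And>i. i < l \<Longrightarrow>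
        real_analytic (phF i) \<and> periodic_2pi (phF i) \<and>
        real_analytic (phtF i) \<and> periodic_2pi (phtF i) \<and>
        real_analytic (phR i) \<and> periodic_2pi (phR i) \<and>
        real_analytic (phtR i) \<and> periodic_2pi (phtR i)"
    and zerosF: "\<And>i. i < l \<Longrightarrow> finite {x \<in> {0..<2 * pi}. phF i x = 0}"
    and zerosR: "\<And>i. i < l \<Longrightarrow> finite {x \<in> {0..<2 * pi}. phR i x = 0}"
    and diagF: "\<And>i x. i < l \<Longrightarrow> phF i x \<noteq> 0 \<Longrightarrow> F i i x = phtF i x / phF i x"
    and diagR: "\<And>i x. i < l \<Longrightarrow> phR i x \<noteq> 0 \<Longrightarrow> R i i x = phtR i x / phR i x"
  shows "\<exists>C>0. \<forall>N::nat. \<forall>lam::real. \<forall>E::real. \<forall>x::real. \<forall>\<alpha> \<alpha>'.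
      N > 1 \<longrightarrow> lam > 0 \<longrightarrow> E \<noteq> 0 \<longrightarrow>
      \<alpha> \<in> {1..N * l} \<longrightarrow> \<alpha>' \<in> {1..N * l} \<longrightarrow>
      tildemu l N W R F phF phtF phR phtR \<omega> lam E x \<alpha> \<alpha>' \<noteq> 0 \<longrightarrow>
      1 / real (N * l) * ln \<bar>tildemu l N W R F phF phtF phR phtR \<omega> lam E x \<alpha> \<alpha>'\<bar>
        \<le> - real_of_int \<bar>int (pidx l \<alpha>) - int (pidx l \<alpha>')\<bar> / real (N * l) * ln (lam + \<bar>E\<bar>)
           + ln (1 + lam / \<bar>E\<bar>) + C"
proof -
  \<comment> \<open>Only analyticity and periodicity of the coefficients enter.\<close>
  obtain K where K: "K \<ge> 1" "coeffs_bounded l W R F phF phtF phR phtR K"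
    using coeffs_bounded_if_analytic[of l W R F phF phtF phR phtR] anW anR anF anphi by blast
  have "real l * K^3 \<ge> 1 * 1"
    using K(1) l by (intro mult_mono) auto
  then have "ln (6 * real l * K^3) > 0"
    by simp
  then show ?thesis
    using tildemu_log_bound[OF K(2,1) l] by (intro exI[of _ "ln (6 * real l * K^3)"]) auto
qed

end
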